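(* Let $\sigma$ satisfy Condition $O_N$. Then: (i) for $\delta_0\le\lambda<1$ and $0<r\le r_0$, the sets $L_i^r(\lambda)$ ($1\le i\le N$), $L^r(\lambda)$, $\Sigma^r(\lambda)$ and $\Sigma(1)$ are open; (ii) if $1\le k\le N$ and $0<r<s\le r_0$, then $\overline{S_k^r(\lambda)}\subset S_k^s(\lambda)$ for all $0\le\lambda\le1$, and $\overline{\Sigma^r(\lambda)}\subset\Sigma^s(\lambda)$ for all $\delta_0\le\lambda<1$; (iii) if $\Delta\subset\Sigma(1)$ is compact, then $\Delta\subset\Sigma^r(\lambda)$ for some $r\in(0,r_0)$ and $\lambda\in[\delta_0,1)$.
   Context: Wave cone: $\Gamma=\{(p\otimes a,B):p\in\mathbb R^m,\ a\in\mathbb R^n\setminus\{0\},\ B\in\mathbb R^{m\times n},\ Ba=0\}$, $p\otimes a=pa^T$. Write $\rho=(\rho^1,\rho^2)\in\mathbb R^{m\times n}\times\mathbb R^{m\times n}$; $\mathbb B_r,\bar{\mathbb B}_r$ are open/closed balls of radius $r$ about $0$. Condition $O_N$ ($N\ge2$): $\sigma\colon\mathbb R^{m\times n}\to\mathbb R^{m\times n}$ continuous with graph $\mathcal K$; there exist $r_0>0$, $0<\delta_1<\delta_2<1$ and continuous $(\kappa_i,\gamma_i)\colon\bar{\mathbb B}_{r_0}\to[1/\delta_2,1/\delta_1]\times\Gamma$ with $\sum_{i=1}^N\gamma_i\equiv0$ such that, with $\pi_1(\rho)=\rho$, $\pi_i(\rho)=\rho+\gamma_1(\rho)+\dots+\gamma_{i-1}(\rho)$,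 $\xi_i(\rho)=\pi_i(\rho)+\kappa_i(\rho)\gamma_i(\rho)$: (P1)(i) $\xi_i(\rho)\in\mathcal K$ on $\bar{\mathbb B}_{r_0}$; (ii) $\xi_i^1(\bar{\mathbb B}_{r_0})\cap\xi_j^1(\bar{\mathbb B}_{r_0})=\pi_i^1(\bar{\mathbb B}_{r_0})\cap\pi_j^1(\bar{\mathbb B}_{r_0})=\emptyset$ for $i\neq j$; (P2) with $S_i^r(\lambda)=\{\lambda\xi_i(\rho)+(1-\lambda)\pi_i(\rho):\rho\in\mathbb B_r\}$ ($0<r\le r_0$, $0\le\lambda\le1$), there exists $\delta_0\in(\delta_2,1)$ such that for all $0<r\le r_0$ and $\lambda\in\{0\}\cup[\delta_0,1)$ the sets $S_1^r(\lambda),\dots,S_N^r(\lambda)$ are open and pairwise disjoint. Derived sets: $L_i^r(\lambda)=\bigcup\{[\alpha,\beta]:\alpha\in S_i^r(\lambda),\beta\in S_i^r(0),\alpha-\beta\in\Gamma\}$; $L^r(\lambda)=\bigcup_iL_i^r(\lambda)$; $\Sigma^r(\lambda)=\bigcup_{\delta_0\le\lambda'\le\lambda}L^r(\lambda')$ for $\delta_0\le\lambda<1$; $\Sigma(1)=\bigcup_{\delta_0\le\lambda<1}\Sigma^{r_0}(\lambda)$. *)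

theory Defs
  imports "HOL-Analysis.Analysis"
begin

text \<open>Matrices in R^{m x n} are rendered as real^'n^'m (m rows, n columns);
 the variable rho = (rho^1, rho^2) lives in the product space, with the product
 (Euclidean) norm.  Indices i range over {1..N}.\<close>

definition outer :: "real^'m \<Rightarrow> real^'n \<Rightarrow> real^'n^'m" where
  "outer p a = (\<chi> i j. p $ i * a $ j)"

definition wave_cone :: "((real^'n^'m) \<times> (real^'n^'m)) set" where
  "wave_cone = {(outer p a, B) | p a B. a \<noteq> 0 \<and> B *v a = 0}"

definition graph_of :: "(real^'n^'m \<Rightarrow> real^'n^'m) \<Rightarrow> ((real^'n^'m) \<times> (real^'n^'m)) set" where
  "graph_of \<sigma> = {(A, \<sigma> A) | A. True}"

definition pi_map :: "(nat \<Rightarrow> 'a::real_vector \<Rightarrow> 'a) \<Rightarrow> nat \<Rightarrow> 'a \<Rightarrow> 'a" where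
  "pi_map \<gamma> i \<rho> = \<rho> + (\<Sum>j\<in>{1..<i}. \<gamma> j \<rho>)"

definition xi_map :: "(nat \<Rightarrow> 'a \<Rightarrow> real) \<Rightarrow> (nat \<Rightarrow> 'a::real_vector \<Rightarrow> 'a) \<Rightarrow> nat \<Rightarrow> 'a \<Rightarrow> 'a" where
  "xi_map \<kappa> \<gamma> i \<rho> = pi_map \<gamma> i \<rho> + \<kappa> i \<rho> *\<^sub>R \<gamma> i \<rho>"

definition S_set :: "(nat \<Rightarrow> 'a \<Rightarrow> real) \<Rightarrow> (nat \<Rightarrow> 'a::real_normed_vector \<Rightarrow> 'a) \<Rightarrow> nat \<Rightarrow> real \<Rightarrow> real \<Rightarrow> 'a set" where
  "S_set \<kappa> \<gamma> i r lam =
     {lam *\<^sub>R xi_map \<kappa> \<gamma> i \<rho> + (1 - lam) *\<^sub>R pi_map \<gamma> i \<rho> | \<rho>. \<rho> \<in> ball 0 r}"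

definition L_set :: "(nat \<Rightarrow> (real^'n^'m) \<times> (real^'n^'m) \<Rightarrow> real) \<Rightarrow>
    (nat \<Rightarrow> (real^'n^'m) \<times> (real^'n^'m) \<Rightarrow> (real^'n^'m) \<times> (real^'n^'m)) \<Rightarrow>
    nat \<Rightarrow> real \<Rightarrow> real \<Rightarrow> ((real^'n^'m) \<times> (real^'n^'m)) set" where
  "L_set \<kappa> \<gamma> i r lam =
     \<Union>{closed_segment \<alpha> \<beta> | \<alpha> \<beta>. \<alpha> \<in> S_set \<kappa> \<gamma> i r lam \<and> \<beta> \<in> S_set \<kappa> \<gamma> i r 0 \<and> \<alpha> - \<beta> \<in> wave_cone}"

definition L_union :: "nat \<Rightarrow> (nat \<Rightarrow> (real^'n^'m) \<times> (real^'n^'m) \<Rightarrow> real) \<Rightarrow>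
    (nat \<Rightarrow> (real^'n^'m) \<times> (real^'n^'m) \<Rightarrow> (real^'n^'m) \<times> (real^'n^'m)) \<Rightarrow>
    real \<Rightarrow> real \<Rightarrow> ((real^'n^'m) \<times> (real^'n^'m)) set" where
  "L_union N \<kappa> \<gamma> r lam = (\<Union>i\<in>{1..N}. L_set \<kappa> \<gamma> i r lam)"

definition Sigma_set :: "nat \<Rightarrow> real \<Rightarrow> (nat \<Rightarrow> (real^'n^'m) \<times> (real^'n^'m) \<Rightarrow> real) \<Rightarrow>
    (nat \<Rightarrow> (real^'n^'m) \<times> (real^'n^'m) \<Rightarrow> (real^'n^'m) \<times> (real^'n^'m)) \<Rightarrow>
    real \<Rightarrow> real \<Rightarrow> ((real^'n^'m) \<times> (real^'n^'m)) set" where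
  "Sigma_set N \<delta>0 \<kappa> \<gamma> r lam = (\<Union>lam'\<in>{\<delta>0..lam}. L_union N \<kappa> \<gamma> r lam')"

definition Sigma_one :: "nat \<Rightarrow> real \<Rightarrow> real \<Rightarrow> (nat \<Rightarrow> (real^'n^'m) \<times> (real^'n^'m) \<Rightarrow> real) \<Rightarrow>
    (nat \<Rightarrow> (real^'n^'m) \<times> (real^'n^'m) \<Rightarrow> (real^'n^'m) \<times> (real^'n^'m)) \<Rightarrow>
    ((real^'n^'m) \<times> (real^'n^'m)) set" where
  "Sigma_one N r0 \<delta>0 \<kappa> \<gamma> = (\<Union>lam\<in>{\<delta>0..<1}. Sigma_set N \<delta>0 \<kappa> \<gamma> r0 lam)"

definition condition_O :: "nat \<Rightarrow> (real^'n^'m \<Rightarrow> real^'n^'m) \<Rightarrow> real \<Rightarrow> real \<Rightarrow> real \<Rightarrow> real \<Rightarrow>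
    (nat \<Rightarrow> (real^'n^'m) \<times> (real^'n^'m) \<Rightarrow> real) \<Rightarrow>
    (nat \<Rightarrow> (real^'n^'m) \<times> (real^'n^'m) \<Rightarrow> (real^'n^'m) \<times> (real^'n^'m)) \<Rightarrow> bool" where
  "condition_O N \<sigma> r0 \<delta>1 \<delta>2 \<delta>0 \<kappa> \<gamma> \<longleftrightarrow>
     N \<ge> 2 \<and> continuous_on UNIV \<sigma> \<and>
     r0 > 0 \<and> 0 < \<delta>1 \<and> \<delta>1 < \<delta>2 \<and> \<delta>2 < 1 \<and>
     (\<forall>i\<in>{1..N}. continuous_on (cball 0 r0) (\<kappa> i) \<and> continuous_on (cball 0 r0) (\<gamma> i) \<and>
        (\<forall>\<rho>\<in>cball 0 r0. \<kappa> i \<rho> \<in> {1/\<delta>2..1/\<delta>1} \<and> \<gamma> i \<rho> \<in> wave_cone)) \<and>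
     (\<forall>\<rho>\<in>cball 0 r0. (\<Sum>i\<in>{1..N}. \<gamma> i \<rho>) = 0) \<and>
     \<comment> \<open>(P1)(i)\<close>
     (\<forall>i\<in>{1..N}. \<forall>\<rho>\<in>cball 0 r0. xi_map \<kappa> \<gamma> i \<rho> \<in> graph_of \<sigma>) \<and>
     \<comment> \<open>(P1)(ii)\<close>
     (\<forall>i\<in>{1..N}. \<forall>j\<in>{1..N}. i \<noteq> j \<longrightarrow>
        (fst \<circ> xi_map \<kappa> \<gamma> i) ` cball 0 r0 \<inter> (fst \<circ> xi_map \<kappa> \<gamma> j) ` cball 0 r0 = {} \<and>
        (fst \<circ> pi_map \<gamma> i) ` cball 0 r0 \<inter> (fst \<circ> pi_map \<gamma> j) ` cball 0 r0 = {}) \<and>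
     \<comment> \<open>(P2)\<close>
     \<delta>2 < \<delta>0 \<and> \<delta>0 < 1 \<and>
     (\<forall>r\<in>{0<..r0}. \<forall>lam\<in>insert 0 {\<delta>0..<1}.
        (\<forall>i\<in>{1..N}. open (S_set \<kappa> \<gamma> i r lam)) \<and>
        (\<forall>i\<in>{1..N}. \<forall>j\<in>{1..N}. i \<noteq> j \<longrightarrow> S_set \<kappa> \<gamma> i r lam \<inter> S_set \<kappa> \<gamma> j r lam = {}))"

end

theory Submission
  imports Defs
begin

(* L_i^r(lambda) is a union of Gamma-segments joining two open sets; moving both endpoints
   by the same small vector keeps the difference in Gamma, so these unions are open.
   Over a parameter set of (lambda', rho, rho', u), Sigma^r(lambda) is a continuous image;
   replacing the open ball of radius r by the closed one gives a compact superset (Gamma is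
   closed), which sits inside Sigma^s(lambda) for s > r. Finally Sigma(1) is covered by the
   directed family of open sets Sigma^r(lambda) with r < r0, lambda < 1, so a compact subset
   lies in one member. *)

type_synonym ('n, 'm) matrix_pair = "(real^'n^'m) \<times> (real^'n^'m)"

lemma outer_matrix_vector_mult: "outer p a *v v = (a \<bullet> v) *\<^sub>R p"
  by (simp add: vec_eq_iff outer_def matrix_vector_mult_def inner_vec_def sum_distrib_left
      mult.commute mult.left_commute)

lemma outer_scaleR_right: "outer p (c *\<^sub>R a) = outer (c *\<^sub>R p) a"
  by (simp add: vec_eq_iff outer_def)

lemma wave_cone_eq_unit_directions:
  "(wave_cone :: ('n::finite, 'm::finite) matrix_pair set) =
     {(M, B). \<exists>a :: real^'n. norm a = 1 \<and> B *v a = 0 \<and> M = outer (M *v a) a}"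
proof (intro set_eqI iffI)
  fix y :: "('n, 'm) matrix_pair"
  assume "y \<in> wave_cone"
  then obtain p a B where y: "y = (outer p a, B)" and a: "a \<noteq> 0" "B *v a = 0"
    unfolding wave_cone_def by blast
  define e where "e = a /\<^sub>R norm a"
  have e: "norm e = 1" "B *v e = 0" "a = norm a *\<^sub>R e"
    using a by (simp_all add: e_def matrix_vector_mult_scaleR)
  have "outer p a = outer (norm a *\<^sub>R p) e"
    by (subst e(3)) (simp add: outer_scaleR_right)
  moreover have "outer (norm a *\<^sub>R p) e *v e = norm a *\<^sub>R p"
    using e(1) by (simp add: outer_matrix_vector_mult inner_commute dot_square_norm)
  ultimately show "y \<in> {(M, B). \<exists>a. norm a = 1 \<and> B *v a = 0 \<and> M = outer (M *v a) a}"
    using e y by auto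
next
  fix y :: "('n, 'm) matrix_pair"
  assume "y \<in> {(M, B). \<exists>a. norm a = 1 \<and> B *v a = 0 \<and> M = outer (M *v a) a}"
  then obtain a M B where "y = (M, B)" "norm a = 1" "B *v a = 0" "M = outer (M *v a) a"
    by auto
  then show "y \<in> wave_cone"
    unfolding wave_cone_def by force
qed

lemma closed_wave_cone: "closed (wave_cone :: ('n::finite, 'm::finite) matrix_pair set)"
proof -
  have "closed {(a :: real^'n, M :: real^'n^'m, B :: real^'n^'m).
      B *v a = 0 \<and> M = outer (M *v a) a}"
    unfolding case_prod_beta outer_def matrix_vector_mult_def
    by (intro closed_Collect_conj closed_Collect_eq continuous_intros)
  from closed_compact_projection[OF compact_sphere this, of 0 1]
  show ?thesis
    unfolding wave_cone_eq_unit_directions by (simp add: case_prod_unfold)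
qed

lemma open_Union_closed_segments:
  fixes A B :: "'a::real_normed_vector set"
  assumes "open A" "open B"
  shows "open (\<Union>{closed_segment a b | a b. a \<in> A \<and> b \<in> B \<and> a - b \<in> C})"
    (is "open ?L")
  unfolding open_contains_ball
proof
  fix x assume "x \<in> ?L"
  then obtain a b where ab: "a \<in> A" "b \<in> B" "a - b \<in> C" "x \<in> closed_segment a b"
    by blast
  then obtain u where u: "0 \<le> u" "u \<le> 1" "x = (1 - u) *\<^sub>R a + u *\<^sub>R b"
    unfolding closed_segment_def by blast
  obtain e1 where e1: "e1 > 0" "ball a e1 \<subseteq> A"
    using assms(1) ab(1) open_contains_ball by blast
  obtain e2 where e2: "e2 > 0" "ball b e2 \<subseteq> B"
    using assms(2) ab(2) open_contains_ball by blast
  have "ball x (min e1 e2) \<subseteq> ?L"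
  proof
    fix y assume "y \<in> ball x (min e1 e2)"
    then have d: "norm (x - y) < e1" "norm (x - y) < e2"
      by (simp_all add: dist_norm)
    have "a + (y - x) \<in> A"
      using d(1) by (intro subsetD[OF e1(2)]) (simp add: dist_norm)
    moreover have "b + (y - x) \<in> B"
      using d(2) by (intro subsetD[OF e2(2)]) (simp add: dist_norm)
    moreover have "(a + (y - x)) - (b + (y - x)) \<in> C"
      using ab(3) by simp
    moreover have "y \<in> closed_segment (a + (y - x)) (b + (y - x))"
      unfolding closed_segment_def using u by (intro CollectI exI[of _ u]) (simp add: algebra_simps)
    ultimately show "y \<in> ?L" by blast
  qed
  then show "\<exists>e>0. ball x e \<subseteq> ?L"
    using e1 e2 by (intro exI[of _ "min e1 e2"]) simp
qed

lemma closure_image_ball_subset: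
  fixes f :: "'a::{real_normed_vector, heine_borel} \<Rightarrow> 'b::metric_space"
  assumes "continuous_on (cball 0 r) f" "r < s"
  shows "closure (f ` ball 0 r) \<subseteq> f ` ball 0 s"
proof -
  have "compact (f ` cball 0 r)"
    using assms(1) by (rule compact_continuous_image[OF _ compact_cball])
  then have "closure (f ` ball 0 r) \<subseteq> f ` cball 0 r"
    by (meson ball_subset_cball closure_minimal compact_imp_closed image_mono)
  also have "\<dots> \<subseteq> f ` ball 0 s"
    using assms(2) by (intro image_mono) auto
  finally show ?thesis .
qed

lemma compact_subset_directed_UN:
  assumes "compact K" "K \<subseteq> (\<Union>i\<in>I. U i)" "\<And>i. i \<in> I \<Longrightarrow> open (U i)" "I \<noteq> {}"
    and directed: "\<And>i j. i \<in> I \<Longrightarrow> j \<in> I \<Longrightarrow> \<exists>k\<in>I. U i \<union> U j \<subseteq> U k"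
  shows "\<exists>i\<in>I. K \<subseteq> U i"
proof -
  obtain J where J: "J \<subseteq> I" "finite J" "K \<subseteq> (\<Union>j\<in>J. U j)"
    using compactE_image[OF assms(1) assms(3) assms(2)] by metis
  have "\<exists>k\<in>I. (\<Union>j\<in>J. U j) \<subseteq> U k"
    using J(2,1)
  proof (induction J rule: finite_induct)
    case empty
    then show ?case using assms(4) by auto
  next
    case (insert j J)
    then obtain k where "k \<in> I" "(\<Union>j\<in>J. U j) \<subseteq> U k" by auto
    moreover obtain k' where "k' \<in> I" "U j \<union> U k \<subseteq> U k'"
      using directed[of j k] insert.prems calculation by auto
    ultimately show ?case by auto
  qed
  then show ?thesis using J(3) by auto
qed

definition S_map ::
    "(nat \<Rightarrow> 'a \<Rightarrow> real) \<Rightarrow> (nat \<Rightarrow> 'a::real_vector \<Rightarrow> 'a) \<Rightarrow> nat \<Rightarrow> real \<Rightarrow> 'a \<Rightarrow> 'a"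
  where "S_map \<kappa> \<gamma> i lam \<rho> = lam *\<^sub>R xi_map \<kappa> \<gamma> i \<rho> + (1 - lam) *\<^sub>R pi_map \<gamma> i \<rho>"

lemma S_set_eq_image: "S_set \<kappa> \<gamma> i r lam = S_map \<kappa> \<gamma> i lam ` ball 0 r"
  by (auto simp: S_set_def S_map_def)

lemma continuous_on_S_map:
  fixes \<kappa> :: "nat \<Rightarrow> 'a::real_normed_vector \<Rightarrow> real"
  assumes "continuous_on R (\<kappa> i)" "continuous_on R (\<gamma> i)"
    and "\<And>j. j \<in> {1..<i} \<Longrightarrow> continuous_on R (\<gamma> j)"
  shows "continuous_on (UNIV \<times> R) (\<lambda>(lam, \<rho>). S_map \<kappa> \<gamma> i lam \<rho>)"
proof -
  have pi: "continuous_on R (pi_map \<gamma> i)"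
    unfolding pi_map_def[abs_def] by (intro continuous_intros assms(3))
  then have xi: "continuous_on R (xi_map \<kappa> \<gamma> i)"
    unfolding xi_map_def[abs_def] by (intro continuous_intros assms(1,2))
  have "continuous_on (UNIV \<times> R) (\<lambda>x. pi_map \<gamma> i (snd x))"
    "continuous_on (UNIV \<times> R) (\<lambda>x. xi_map \<kappa> \<gamma> i (snd x))"
    by (auto intro: continuous_on_compose2[OF pi continuous_on_snd]
        continuous_on_compose2[OF xi continuous_on_snd])
  then show ?thesis
    unfolding S_map_def case_prod_beta by (intro continuous_intros)
qed

definition wave_segments ::
    "(nat \<Rightarrow> ('n::finite, 'm::finite) matrix_pair \<Rightarrow> real) \<Rightarrow>
     (nat \<Rightarrow> ('n, 'm) matrix_pair \<Rightarrow> ('n, 'm) matrix_pair) \<Rightarrow>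
     nat \<Rightarrow> real set \<Rightarrow> ('n, 'm) matrix_pair set \<Rightarrow> ('n, 'm) matrix_pair set"
  where "wave_segments \<kappa> \<gamma> i \<Lambda> R =
    {(1 - u) *\<^sub>R S_map \<kappa> \<gamma> i l \<rho> + u *\<^sub>R S_map \<kappa> \<gamma> i 0 \<rho>' | l \<rho> \<rho>' u.
       l \<in> \<Lambda> \<and> \<rho> \<in> R \<and> \<rho>' \<in> R \<and> u \<in> {0..1} \<and> S_map \<kappa> \<gamma> i l \<rho> - S_map \<kappa> \<gamma> i 0 \<rho>' \<in> wave_cone}"

lemma L_set_eq_wave_segments: "L_set \<kappa> \<gamma> i r lam = wave_segments \<kappa> \<gamma> i {lam} (ball 0 r)"
proof (intro subset_antisym subsetI)
  fix x assume "x \<in> L_set \<kappa> \<gamma> i r lam"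
  then obtain \<rho> \<rho>' and u :: real where "\<rho> \<in> ball 0 r" "\<rho>' \<in> ball 0 r" "u \<in> {0..1}"
    "S_map \<kappa> \<gamma> i lam \<rho> - S_map \<kappa> \<gamma> i 0 \<rho>' \<in> wave_cone"
    "x = (1 - u) *\<^sub>R S_map \<kappa> \<gamma> i lam \<rho> + u *\<^sub>R S_map \<kappa> \<gamma> i 0 \<rho>'"
    unfolding L_set_def S_set_eq_image closed_segment_def atLeastAtMost_iff by blast
  then show "x \<in> wave_segments \<kappa> \<gamma> i {lam} (ball 0 r)"
    unfolding wave_segments_def by blast
next
  fix x assume "x \<in> wave_segments \<kappa> \<gamma> i {lam} (ball 0 r)"
  then obtain \<rho> \<rho>' and u :: real where "\<rho> \<in> ball 0 r" "\<rho>' \<in> ball 0 r" "u \<in> {0..1}"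
    "S_map \<kappa> \<gamma> i lam \<rho> - S_map \<kappa> \<gamma> i 0 \<rho>' \<in> wave_cone"
    "x \<in> closed_segment (S_map \<kappa> \<gamma> i lam \<rho>) (S_map \<kappa> \<gamma> i 0 \<rho>')"
    unfolding wave_segments_def closed_segment_def atLeastAtMost_iff by blast
  then show "x \<in> L_set \<kappa> \<gamma> i r lam"
    unfolding L_set_def S_set_eq_image by blast
qed

lemma wave_segments_eq_UN: "wave_segments \<kappa> \<gamma> i \<Lambda> R = (\<Union>l\<in>\<Lambda>. wave_segments \<kappa> \<gamma> i {l} R)"
  unfolding wave_segments_def by blast

lemma Sigma_set_eq_wave_segments:
  "Sigma_set N \<delta>0 \<kappa> \<gamma> r lam = (\<Union>i\<in>{1..N}. wave_segments \<kappa> \<gamma> i {\<delta>0..lam} (ball 0 r))"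
  unfolding Sigma_set_def L_union_def L_set_eq_wave_segments wave_segments_eq_UN[of _ _ _ "{\<delta>0..lam}"]
  by blast

lemma wave_segments_mono:
  "\<Lambda> \<subseteq> \<Lambda>' \<Longrightarrow> R \<subseteq> R' \<Longrightarrow> wave_segments \<kappa> \<gamma> i \<Lambda> R \<subseteq> wave_segments \<kappa> \<gamma> i \<Lambda>' R'"
  unfolding wave_segments_def by blast

lemma wave_segments_eq_image:
  "wave_segments \<kappa> \<gamma> i \<Lambda> R =
     (\<lambda>(l, \<rho>, \<rho>', u). (1 - u) *\<^sub>R S_map \<kappa> \<gamma> i l \<rho> + u *\<^sub>R S_map \<kappa> \<gamma> i 0 \<rho>') `
       {(l, \<rho>, \<rho>', u) \<in> \<Lambda> \<times> R \<times> R \<times> {0..1}. S_map \<kappa> \<gamma> i l \<rho> - S_map \<kappa> \<gamma> i 0 \<rho>' \<in> wave_cone}"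
  unfolding wave_segments_def by (auto simp: image_iff; blast)

lemma compact_wave_segments:
  fixes R :: "('n::finite, 'm::finite) matrix_pair set"
  assumes "compact \<Lambda>" "compact R"
    and "continuous_on R (\<kappa> i)" "continuous_on R (\<gamma> i)"
    and "\<And>j. j \<in> {1..<i} \<Longrightarrow> continuous_on R (\<gamma> j)"
  shows "compact (wave_segments \<kappa> \<gamma> i \<Lambda> R)"
proof -
  define D where "D = \<Lambda> \<times> R \<times> R \<times> {0..1::real}"
  define a where "a p = S_map \<kappa> \<gamma> i (fst p) (fst (snd p))"
    for p :: "real \<times> ('n, 'm) matrix_pair \<times> ('n, 'm) matrix_pair \<times> real"
  define b where "b p = S_map \<kappa> \<gamma> i 0 (fst (snd (snd p)))"
    for p :: "real \<times> ('n, 'm) matrix_pair \<times> ('n, 'm) matrix_pair \<times> real"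
  have S: "continuous_on (UNIV \<times> R) (\<lambda>(lam, \<rho>). S_map \<kappa> \<gamma> i lam \<rho>)"
    using assms(3-5) by (rule continuous_on_S_map)
  have "continuous_on D (\<lambda>p. (\<lambda>(lam, \<rho>). S_map \<kappa> \<gamma> i lam \<rho>) (fst p, fst (snd p)))"
    by (rule continuous_on_compose2[OF S]) (auto simp: D_def intro!: continuous_intros)
  then have a: "continuous_on D a"
    by (simp add: a_def[abs_def])
  have "continuous_on D (\<lambda>p. (\<lambda>(lam, \<rho>). S_map \<kappa> \<gamma> i lam \<rho>) (0, fst (snd (snd p))))"
    by (rule continuous_on_compose2[OF S]) (auto simp: D_def intro!: continuous_intros)
  then have b: "continuous_on D b"
    by (simp add: b_def[abs_def])
  have "compact D"
    unfolding D_def using assms(1,2) compact_Icc by (intro compact_Times)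
  moreover have "continuous_on D (\<lambda>p. a p - b p)"
    using a b by (rule continuous_on_diff)
  ultimately have "closed (D \<inter> (\<lambda>p. a p - b p) -` wave_cone)"
    using compact_imp_closed closed_wave_cone continuous_closed_preimage by blast
  with \<open>compact D\<close> have "compact (D \<inter> (\<lambda>p. a p - b p) -` wave_cone)"
    using compact_Int_closed by fastforce
  moreover have "continuous_on D (\<lambda>p. (1 - snd (snd (snd p))) *\<^sub>R a p + snd (snd (snd p)) *\<^sub>R b p)"
    using a b by (intro continuous_on_add continuous_on_scaleR continuous_on_diff
        continuous_on_const continuous_on_snd continuous_on_id)
  ultimately have "compact ((\<lambda>p. (1 - snd (snd (snd p))) *\<^sub>R a p + snd (snd (snd p)) *\<^sub>R b p) `
      (D \<inter> (\<lambda>p. a p - b p) -` wave_cone))"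
    by (intro compact_continuous_image) (auto elim: continuous_on_subset)
  also have "\<dots> = wave_segments \<kappa> \<gamma> i \<Lambda> R"
    unfolding wave_segments_eq_image D_def
    by (intro image_cong) (auto simp: a_def b_def)
  finally show ?thesis .
qed

lemma wave_segments_ball_subset_UN:
  "wave_segments \<kappa> \<gamma> i \<Lambda> (ball 0 r) \<subseteq> (\<Union>r'\<in>{0<..<r}. wave_segments \<kappa> \<gamma> i \<Lambda> (ball 0 r'))"
proof
  fix x assume "x \<in> wave_segments \<kappa> \<gamma> i \<Lambda> (ball 0 r)"
  then obtain l \<rho> \<rho>' u where x: "x = (1 - u) *\<^sub>R S_map \<kappa> \<gamma> i l \<rho> + u *\<^sub>R S_map \<kappa> \<gamma> i 0 \<rho>'"
    and par: "l \<in> \<Lambda>" "u \<in> {0..1}" "S_map \<kappa> \<gamma> i l \<rho> - S_map \<kappa> \<gamma> i 0 \<rho>' \<in> wave_cone"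
    and \<rho>: "norm \<rho> < r" "norm \<rho>' < r"
    unfolding wave_segments_def by auto
  define r' where "r' = (r + max (norm \<rho>) (norm \<rho>')) / 2"
  have "0 < r"
    using \<rho>(1) norm_ge_zero[of \<rho>] by linarith
  then have r': "r' \<in> {0<..<r}" "\<rho> \<in> ball 0 r'" "\<rho>' \<in> ball 0 r'"
    using \<rho> by (auto simp: r'_def max_def add_pos_nonneg)
  then have "x \<in> wave_segments \<kappa> \<gamma> i \<Lambda> (ball 0 r')"
    unfolding wave_segments_def using x par by blast
  with r'(1) show "x \<in> (\<Union>r'\<in>{0<..<r}. wave_segments \<kappa> \<gamma> i \<Lambda> (ball 0 r'))"
    by blast
qed

lemma Sigma_set_mono:
  "r \<le> s \<Longrightarrow> lam \<le> lam' \<Longrightarrow> Sigma_set N \<delta>0 \<kappa> \<gamma> r lam \<subseteq> Sigma_set N \<delta>0 \<kappa> \<gamma> s lam'"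
  unfolding Sigma_set_eq_wave_segments by (intro UN_mono wave_segments_mono) auto

lemma Sigma_one_subset_UN:
  "Sigma_one N r0 \<delta>0 \<kappa> \<gamma> \<subseteq> (\<Union>(r, lam) \<in> {0<..<r0} \<times> {\<delta>0..<1}. Sigma_set N \<delta>0 \<kappa> \<gamma> r lam)"
proof
  fix x assume "x \<in> Sigma_one N r0 \<delta>0 \<kappa> \<gamma>"
  then obtain lam i where lam: "lam \<in> {\<delta>0..<1}" and i: "i \<in> {1..N}"
    and "x \<in> wave_segments \<kappa> \<gamma> i {\<delta>0..lam} (ball 0 r0)"
    unfolding Sigma_one_def Sigma_set_eq_wave_segments by blast
  then obtain r where r: "r \<in> {0<..<r0}" and "x \<in> wave_segments \<kappa> \<gamma> i {\<delta>0..lam} (ball 0 r)"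
    using wave_segments_ball_subset_UN by blast
  with i have "x \<in> Sigma_set N \<delta>0 \<kappa> \<gamma> r lam"
    unfolding Sigma_set_eq_wave_segments by blast
  with r lam show "x \<in> (\<Union>(r, lam) \<in> {0<..<r0} \<times> {\<delta>0..<1}. Sigma_set N \<delta>0 \<kappa> \<gamma> r lam)"
    by blast
qed

context
  fixes \<sigma> N r0 \<delta>1 \<delta>2 \<delta>0 \<kappa> \<gamma>
  assumes O: "condition_O N \<sigma> r0 \<delta>1 \<delta>2 \<delta>0 \<kappa> \<gamma>"
begin

lemma condition_O_r0_pos: "0 < r0"
  using O by (simp add: condition_O_def)

lemma condition_O_delta0_less_1: "\<delta>0 < 1"
  using O by (simp add: condition_O_def)

lemma condition_O_open_S_set:
  "i \<in> {1..N} \<Longrightarrow> r \<in> {0<..r0} \<Longrightarrow> lam \<in> insert 0 {\<delta>0..<1} \<Longrightarrow> open (S_set \<kappa> \<gamma> i r lam)"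
  using O unfolding condition_O_def by (elim conjE) blast

lemma condition_O_continuous_on_cball:
  assumes "i \<in> {1..N}" "r \<le> r0"
  shows "continuous_on (cball 0 r) (\<kappa> i)" "continuous_on (cball 0 r) (\<gamma> i)"
proof -
  have "continuous_on (cball 0 r0) (\<kappa> i) \<and> continuous_on (cball 0 r0) (\<gamma> i)"
    using O assms(1) unfolding condition_O_def by (elim conjE) blast
  moreover have "cball 0 r \<subseteq> cball 0 r0"
    using assms(2) by auto
  ultimately show "continuous_on (cball 0 r) (\<kappa> i)" "continuous_on (cball 0 r) (\<gamma> i)"
    by (auto intro: continuous_on_subset)
qed

lemma closure_S_set_subset:
  assumes "i \<in> {1..N}" "r < s" "s \<le> r0"
  shows "closure (S_set \<kappa> \<gamma> i r lam) \<subseteq> S_set \<kappa> \<gamma> i s lam"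
proof -
  have "continuous_on (UNIV \<times> cball 0 r) (\<lambda>(lam, \<rho>). S_map \<kappa> \<gamma> i lam \<rho>)"
    using assms by (intro continuous_on_S_map condition_O_continuous_on_cball) auto
  then have "continuous_on (cball 0 r) (\<lambda>\<rho>. (\<lambda>(lam, \<rho>). S_map \<kappa> \<gamma> i lam \<rho>) (lam, \<rho>))"
    by (rule continuous_on_compose2) (auto intro!: continuous_intros)
  then show ?thesis
    unfolding S_set_eq_image using assms(2) by (intro closure_image_ball_subset) auto
qed

lemma closure_Sigma_set_subset:
  assumes "r < s" "s \<le> r0"
  shows "closure (Sigma_set N \<delta>0 \<kappa> \<gamma> r lam) \<subseteq> Sigma_set N \<delta>0 \<kappa> \<gamma> s lam"
proof -
  let ?K = "\<Union>i\<in>{1..N}. wave_segments \<kappa> \<gamma> i {\<delta>0..lam} (cball 0 r)"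
  have "compact ?K"
  proof (intro compact_UN finite_atLeastAtMost)
    fix i assume "i \<in> {1..N}"
    with assms show "compact (wave_segments \<kappa> \<gamma> i {\<delta>0..lam} (cball 0 r))"
      by (intro compact_wave_segments compact_Icc compact_cball condition_O_continuous_on_cball) auto
  qed
  moreover have "Sigma_set N \<delta>0 \<kappa> \<gamma> r lam \<subseteq> ?K"
    unfolding Sigma_set_eq_wave_segments by (intro UN_mono wave_segments_mono ball_subset_cball) auto
  ultimately have "closure (Sigma_set N \<delta>0 \<kappa> \<gamma> r lam) \<subseteq> ?K"
    by (intro closure_minimal compact_imp_closed)
  also have "?K \<subseteq> Sigma_set N \<delta>0 \<kappa> \<gamma> s lam"
    unfolding Sigma_set_eq_wave_segments using assms(1)
    by (intro UN_mono wave_segments_mono) auto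
  finally show ?thesis .
qed

lemma open_L_set:
  "i \<in> {1..N} \<Longrightarrow> r \<in> {0<..r0} \<Longrightarrow> lam \<in> {\<delta>0..<1} \<Longrightarrow> open (L_set \<kappa> \<gamma> i r lam)"
  unfolding L_set_def by (intro open_Union_closed_segments condition_O_open_S_set) auto

lemma open_L_union: "r \<in> {0<..r0} \<Longrightarrow> lam \<in> {\<delta>0..<1} \<Longrightarrow> open (L_union N \<kappa> \<gamma> r lam)"
  unfolding L_union_def by (intro open_UN ballI open_L_set)

lemma open_Sigma_set: "r \<in> {0<..r0} \<Longrightarrow> lam < 1 \<Longrightarrow> open (Sigma_set N \<delta>0 \<kappa> \<gamma> r lam)"
  unfolding Sigma_set_def by (intro open_UN ballI open_L_union) auto

lemma open_Sigma_one: "open (Sigma_one N r0 \<delta>0 \<kappa> \<gamma>)"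
  unfolding Sigma_one_def using condition_O_r0_pos by (intro open_UN ballI open_Sigma_set) auto

lemma compact_subset_Sigma_set:
  assumes "compact \<Delta>" "\<Delta> \<subseteq> Sigma_one N r0 \<delta>0 \<kappa> \<gamma>"
  shows "\<exists>r\<in>{0<..<r0}. \<exists>lam\<in>{\<delta>0..<1}. \<Delta> \<subseteq> Sigma_set N \<delta>0 \<kappa> \<gamma> r lam"
proof -
  define I where "I = {0<..<r0} \<times> {\<delta>0..<1}"
  define U where "U = (\<lambda>(r, lam). Sigma_set N \<delta>0 \<kappa> \<gamma> r lam)"
  have "\<exists>p\<in>I. \<Delta> \<subseteq> U p"
  proof (rule compact_subset_directed_UN[OF assms(1)])
    show "\<Delta> \<subseteq> (\<Union>p\<in>I. U p)"
      unfolding I_def U_def using assms(2) Sigma_one_subset_UN by (rule order_trans)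
    show "open (U p)" if "p \<in> I" for p
      using that by (auto simp: I_def U_def intro!: open_Sigma_set)
    show "I \<noteq> {}"
      using condition_O_r0_pos condition_O_delta0_less_1 by (auto simp: I_def)
    show "\<exists>q\<in>I. U p \<union> U p' \<subseteq> U q" if "p \<in> I" "p' \<in> I" for p p'
    proof -
      obtain r lam r' lam' where p: "p = (r, lam)" "p' = (r', lam')"
        by fastforce
      have "U p \<union> U p' \<subseteq> U (max r r', max lam lam')"
        unfolding p U_def by (simp add: Sigma_set_mono)
      moreover have "(max r r', max lam lam') \<in> I"
        using that unfolding p I_def by auto
      ultimately show ?thesis by blast
    qed
  qed
  then show ?thesis
    by (auto simp: I_def U_def)
qed

end

theorem proposition3p9:
  fixes \<sigma> :: "real^'n^'m \<Rightarrow> real^'n^'m"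
    and N :: nat and r0 \<delta>1 \<delta>2 \<delta>0 :: real
    and \<kappa> :: "nat \<Rightarrow> (real^'n^'m) \<times> (real^'n^'m) \<Rightarrow> real"
    and \<gamma> :: "nat \<Rightarrow> (real^'n^'m) \<times> (real^'n^'m) \<Rightarrow> (real^'n^'m) \<times> (real^'n^'m)"
  assumes "condition_O N \<sigma> r0 \<delta>1 \<delta>2 \<delta>0 \<kappa> \<gamma>"
  shows "(\<forall>lam\<in>{\<delta>0..<1}. \<forall>r\<in>{0<..r0}.
            (\<forall>i\<in>{1..N}. open (L_set \<kappa> \<gamma> i r lam)) \<and>
            open (L_union N \<kappa> \<gamma> r lam) \<and>
            open (Sigma_set N \<delta>0 \<kappa> \<gamma> r lam) \<and>
            open (Sigma_one N r0 \<delta>0 \<kappa> \<gamma>))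
       \<and> (\<forall>k\<in>{1..N}. \<forall>r s. 0 < r \<and> r < s \<and> s \<le> r0 \<longrightarrow>
            (\<forall>lam\<in>{0..1}. closure (S_set \<kappa> \<gamma> k r lam) \<subseteq> S_set \<kappa> \<gamma> k s lam) \<and>
            (\<forall>lam\<in>{\<delta>0..<1}. closure (Sigma_set N \<delta>0 \<kappa> \<gamma> r lam) \<subseteq> Sigma_set N \<delta>0 \<kappa> \<gamma> s lam))
       \<and> (\<forall>\<Delta>. compact \<Delta> \<and> \<Delta> \<subseteq> Sigma_one N r0 \<delta>0 \<kappa> \<gamma> \<longrightarrow>
            (\<exists>r\<in>{0<..<r0}. \<exists>lam\<in>{\<delta>0..<1}. \<Delta> \<subseteq> Sigma_set N \<delta>0 \<kappa> \<gamma> r lam))"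
  using open_L_set[OF assms] open_L_union[OF assms] open_Sigma_set[OF assms]
    open_Sigma_one[OF assms] closure_S_set_subset[OF assms] closure_Sigma_set_subset[OF assms]
    compact_subset_Sigma_set[OF assms]
  by auto

end
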